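(* Let $\mathcal{W}$ be a finite set and $\mathcal{E}$ a closed convex subset of $\mathcal{P}_{\mathcal{W}}$. Let $\mathcal{X}$ and $\mathcal{Y}$ be finite sets with functions $f_{\mathcal{X}}:\mathcal{W}\to\mathcal{X}$ and $f_{\mathcal{Y}}:\mathcal{W}\to\mathcal{Y}$. For $y^N\in\mathcal{Y}^N$ define $$T(y^N):=\{x^N\in\mathcal{X}^N:\ \exists P\in\mathcal{E},\ P_{\mathcal{X}\times\mathcal{Y}}=\tilde P_{x^N,y^N}\}.$$ Then $$|T(y^N)|\le\max_{P\in\mathcal{E}:\ P_{\mathcal{Y}}=\tilde P_{y^N}}2^{N H(X|Y)_{P_{\mathcal{X}\times\mathcal{Y}}}}.$$
   Context: $\mathcal{P}_\Omega$ denotes the set of probability mass functions on a finite set $\Omega$. For $P\in\mathcal{P}_{\mathcal{W}}$, $P_{\mathcal{X}\times\mathcal{Y}}$ and $P_{\mathcal{Y}}$ are the distributions induced by $w\mapsto(f_{\mathcal{X}}(w),f_{\mathcal{Y}}(w))$ and $w\mapsto f_{\mathcal{Y}}(w)$, i.e. $P_\Gamma(g)=\sum_{w:f_\Gamma(w)=g}P(w)$. For sequences, $\tilde P_{y^N}(y)=\frac1N|\{i:y_i=y\}|$ and $\tilde P_{x^N,y^N}(x,y)=\frac1N|\{i:(x_i,y_i)=(x,y)\}|$ are types. $H(X|Y)_{P_{\mathcal{X}\times\mathcal{Y}}}$ is the conditional Shannon entropy (base 2) of $X$ given $Y$ under the joint distribution $P_{\mathcal{X}\times\mathcal{Y}}$.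 *)

theory Defs
  imports "HOL-Analysis.Analysis"
begin

definition pmfs :: "('w::finite \<Rightarrow> real) set" where
  "pmfs = {P. (\<forall>w. 0 \<le> P w) \<and> (\<Sum>w\<in>UNIV. P w) = 1}"

definition convex_fun_set :: "('w \<Rightarrow> real) set \<Rightarrow> bool" where
  "convex_fun_set E \<longleftrightarrow>
     (\<forall>P\<in>E. \<forall>Q\<in>E. \<forall>t::real. 0 \<le> t \<and> t \<le> 1 \<longrightarrow> (\<lambda>w. t * P w + (1 - t) * Q w) \<in> E)"

definition marg_XY :: "('w::finite \<Rightarrow> 'x) \<Rightarrow> ('w \<Rightarrow> 'y) \<Rightarrow> ('w \<Rightarrow> real) \<Rightarrow> ('x \<times> 'y \<Rightarrow> real)" where
  "marg_XY fX fY P = (\<lambda>(x, y). \<Sum>w\<in>{w. fX w = x \<and> fY w = y}. P w)"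

definition marg_Y :: "('w::finite \<Rightarrow> 'y) \<Rightarrow> ('w \<Rightarrow> real) \<Rightarrow> ('y \<Rightarrow> real)" where
  "marg_Y fY P = (\<lambda>y. \<Sum>w\<in>{w. fY w = y}. P w)"

definition type1 :: "'y list \<Rightarrow> ('y \<Rightarrow> real)" where
  "type1 ys = (\<lambda>y. real (card {i. i < length ys \<and> ys ! i = y}) / real (length ys))"

definition type2 :: "'x list \<Rightarrow> 'y list \<Rightarrow> ('x \<times> 'y \<Rightarrow> real)" where
  "type2 xs ys = (\<lambda>(x, y). real (card {i. i < length ys \<and> xs ! i = x \<and> ys ! i = y}) / real (length ys))"

definition cond_entropy :: "('x::finite \<times> 'y::finite \<Rightarrow> real) \<Rightarrow> real" where
  "cond_entropy Q = - (\<Sum>(x, y)\<in>UNIV.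
      if Q (x, y) = 0 then 0
      else Q (x, y) * log 2 (Q (x, y) / (\<Sum>x'\<in>UNIV. Q (x', y))))"

definition Tset :: "('w::finite \<Rightarrow> real) set \<Rightarrow> ('w \<Rightarrow> 'x::finite) \<Rightarrow> ('w \<Rightarrow> 'y) \<Rightarrow> 'y list \<Rightarrow> 'x list set" where
  "Tset E fX fY ys = {xs. length xs = length ys \<and> (\<exists>P\<in>E. marg_XY fX fY P = type2 xs ys)}"

end

theory Submission
  imports Defs "HOL-Real_Asymp.Real_Asymp"
begin

text \<open>
  Each sequence in \<open>T(y\<^sup>N)\<close> has a joint type realised by a member of \<open>E\<close>; by convexity the
  average \<open>V\<close> of these joint types is realised by some \<open>P \<in> E\<close>, whose \<open>Y\<close>-marginal is the
  type of \<open>y\<^sup>N\<close>. So it suffices to show \<open>|T| \<le> 2 powr (N * H)\<close> with \<open>H = H(X|Y)\<close> under \<open>V\<close>.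
  Let \<open>W(x|y) = V(x,y) / V(y)\<close>. The products \<open>\<Prod>\<^sub>i W(x\<^sub>i|y\<^sub>i)\<close> over \<open>x\<^sup>N \<in> T\<close> sum to at most 1,
  while by Jensen's inequality for \<open>t \<mapsto> 2 powr t\<close> their sum is at least \<open>|T|\<close> times 2 to the
  power of the mean of their logarithms; as \<open>V\<close> is the average joint type, that mean is \<open>-N * H\<close>.
  The maximum over \<open>{P \<in> E. P\<^sub>Y = type of y\<^sup>N}\<close> exists because this set is compact and, the
  \<open>Y\<close>-marginal being fixed on it, the conditional entropy is continuous there.
\<close>

lemma sum_lists_length_eq_prod:
  fixes f :: "'x::finite \<Rightarrow> 'y \<Rightarrow> 'a::comm_semiring_1"
  shows "(\<Sum>xs\<in>{xs. length xs = length ys}. \<Prod>i<length ys. f (xs!i) (ys!i))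
        = (\<Prod>i<length ys. \<Sum>x\<in>UNIV. f x (ys!i))"
proof (induction ys)
  case Nil
  then show ?case by simp
next
  case (Cons y ys)
  let ?L = "{xs::'x list. length xs = length ys}"
  have lists_Cons: "{xs. length xs = length (y#ys)} = (\<lambda>(x,xs). x#xs) ` (UNIV \<times> ?L)"
    by (auto simp: length_Suc_conv image_iff)
  have "(\<Sum>xs\<in>{xs. length xs = length (y#ys)}. \<Prod>i<length (y#ys). f (xs!i) ((y#ys)!i))
      = (\<Sum>(x,xs)\<in>UNIV \<times> ?L. f x y * (\<Prod>i<length ys. f (xs!i) (ys!i)))"
    unfolding lists_Cons
    by (subst sum.reindex) (auto simp: inj_on_def case_prod_unfold prod.lessThan_Suc_shift simp del: prod.lessThan_Suc)
  also have "\<dots> = (\<Sum>x\<in>UNIV. f x y) * (\<Sum>xs\<in>?L. \<Prod>i<length ys. f (xs!i) (ys!i))"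
    by (simp add: sum.cartesian_product[symmetric] sum_product)
  also have "\<dots> = (\<Prod>i<length (y#ys). \<Sum>x\<in>UNIV. f x ((y#ys)!i))"
    using Cons by (simp del: prod.lessThan_Suc add: prod.lessThan_Suc_shift)
  finally show ?case .
qed

lemma finite_lists_length_eq_UNIV: "finite {xs :: 'a::finite list. length xs = n}"
  using finite_lists_length_eq[of "UNIV :: 'a set" n] by simp

lemma sum_prod_lists_le_one:
  fixes W :: "'x::finite \<times> 'y \<Rightarrow> real"
  assumes "T \<subseteq> {xs. length xs = length ys}"
    and "\<And>xy. W xy \<ge> 0" and "\<And>y. (\<Sum>x\<in>UNIV. W (x, y)) \<le> 1"
  shows "(\<Sum>xs\<in>T. \<Prod>i<length ys. W (xs!i, ys!i)) \<le> 1"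
proof -
  have "(\<Sum>xs\<in>T. \<Prod>i<length ys. W (xs!i, ys!i))
      \<le> (\<Sum>xs\<in>{xs. length xs = length ys}. \<Prod>i<length ys. W (xs!i, ys!i))"
    using assms(1,2) by (intro sum_mono2) (auto simp: finite_lists_length_eq_UNIV intro: prod_nonneg)
  also have "\<dots> = (\<Prod>i<length ys. \<Sum>x\<in>UNIV. W (x, ys!i))"
    by (rule sum_lists_length_eq_prod)
  also have "\<dots> \<le> 1"
    using assms(2,3) by (intro prod_le_1) (auto intro: sum_nonneg)
  finally show ?thesis .
qed

lemma sum_lessThan_eq_sum_card_vimage:
  fixes g :: "nat \<Rightarrow> 'a::finite" and h :: "'a \<Rightarrow> 'b::comm_ring_1"
  shows "(\<Sum>i<N. h (g i)) = (\<Sum>a\<in>UNIV. of_nat (card {i. i < N \<and> g i = a}) * h a)"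
proof -
  have "(\<Sum>i<N. h (g i)) = (\<Sum>a\<in>UNIV. \<Sum>i\<in>{i. i \<in> {..<N} \<and> g i = a}. h (g i))"
    by (rule sum.group[symmetric]) auto
  also have "\<dots> = (\<Sum>a\<in>UNIV. of_nat (card {i. i < N \<and> g i = a}) * h a)"
    by (intro sum.cong) auto
  finally show ?thesis .
qed

lemma card_mult_powr_mean_le_sum_powr:
  fixes f :: "'a \<Rightarrow> real"
  assumes "finite A" "A \<noteq> {}" "b > 0"
  shows "real (card A) * b powr (sum f A / card A) \<le> (\<Sum>x\<in>A. b powr f x)"
proof -
  have "exp (\<Sum>x\<in>A. (1 / card A) *\<^sub>R (f x * ln b)) \<le> (\<Sum>x\<in>A. 1 / card A * exp (f x * ln b))"
    using assms by (intro convex_on_sum[OF _ _ exp_convex]) auto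
  then have "b powr (sum f A / card A) \<le> (\<Sum>x\<in>A. b powr f x) / card A"
    using assms by (simp add: powr_def sum_distrib_right[symmetric] sum_divide_distrib[symmetric])
  moreover have "card A > 0"
    using assms by (simp add: card_gt_0_iff)
  ultimately show ?thesis
    by (simp add: pos_le_divide_eq mult.commute)
qed

lemma continuous_on_mult_ln: "continuous_on {0..} (\<lambda>q::real. q * ln q)"
proof (rule continuous_on_eq_continuous_within[THEN iffD2], intro ballI)
  fix x :: real
  assume "x \<in> {0..}"
  show "continuous (at x within {0..}) (\<lambda>q. q * ln q)"
  proof (cases "x = 0")
    case True
    have "((\<lambda>q::real. q * ln q) \<longlongrightarrow> 0) (at_right 0)"
      by real_asymp
    with True show ?thesis
      by (simp add: continuous_within at_within_Ici_at_right)
  next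
    case False
    with \<open>x \<in> {0..}\<close> have "isCont (\<lambda>q. q * ln q) x"
      by (intro continuous_intros) auto
    then show ?thesis
      by (rule continuous_at_imp_continuous_at_within)
  qed
qed

lemma continuous_on_mult_log_div:
  assumes "c \<ge> 0"
  shows "continuous_on {0..} (\<lambda>q::real. q * log b (q / c))"
  \<comment> \<open>for \<open>c = 0\<close> the function vanishes, as \<open>q / 0 = 0\<close> and \<open>ln 0 = 0\<close>\<close>
proof (cases "c = 0")
  case False
  have "continuous_on {0..} (\<lambda>q. inverse (ln b) * (q * ln q - q * ln c))"
    using continuous_on_mult_ln by (intro continuous_on_mult_left continuous_on_diff) (auto intro: continuous_intros)
  moreover have "inverse (ln b) * (q * ln q - q * ln c) = q * log b (q / c)" if "q \<in> {0..}" for q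
    using that assms False by (cases "q = 0") (auto simp: log_def ln_div field_simps)
  ultimately show ?thesis
    by (rule continuous_on_eq)
qed (simp add: log_def)

lemma continuous_on_coordinate [continuous_intros]: "continuous_on S (\<lambda>f. f i)"
  by (rule continuous_on_subset[OF continuous_on_product_coordinates]) simp

lemma pmfs_le_one: "P \<in> pmfs \<Longrightarrow> P w \<le> 1"
  unfolding pmfs_def using member_le_sum[of w UNIV P] by auto

lemma compact_closed_subset_pmfs:
  assumes "closed E" "E \<subseteq> pmfs"
  shows "compact E"
proof -
  have "compactin (product_topology (\<lambda>_. euclidean) UNIV) (Pi\<^sub>E (UNIV :: 'w set) (\<lambda>_. {0..1::real}))"
    by (simp add: compactin_PiE)
  then have "compact (Pi\<^sub>E (UNIV :: 'w set) (\<lambda>_. {0..1::real}))"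
    by (simp add: euclidean_product_topology)
  then have "compact (Pi\<^sub>E UNIV (\<lambda>_. {0..1}) \<inter> E)"
    using assms(1) by (rule compact_Int_closed)
  moreover have "Pi\<^sub>E UNIV (\<lambda>_. {0..1}) \<inter> E = E"
    using assms(2) pmfs_le_one by (fastforce simp: pmfs_def)
  ultimately show ?thesis
    by simp
qed

lemma type1_nonneg: "type1 ys y \<ge> 0"
  by (simp add: type1_def)

lemma type2_nonneg: "type2 xs ys xy \<ge> 0"
  by (simp add: type2_def case_prod_unfold)

lemma type2_pos_at_index:
  assumes "i < length ys"
  shows "type2 xs ys (xs!i, ys!i) > 0"
proof -
  have "i \<in> {j. j < length ys \<and> xs!j = xs!i \<and> ys!j = ys!i}"
    using assms by simp
  then have "card {j. j < length ys \<and> xs!j = xs!i \<and> ys!j = ys!i} > 0"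
    by (subst card_gt_0_iff) auto
  with assms show ?thesis
    by (auto simp: type2_def intro!: divide_pos_pos)
qed

lemma sum_lessThan_length_eq_type2:
  fixes xs :: "'x::finite list" and ys :: "'y::finite list"
  shows "(\<Sum>i<length ys. g (xs!i, ys!i)) = real (length ys) * (\<Sum>xy\<in>UNIV. type2 xs ys xy * g xy)"
proof (cases "ys = []")
  case False
  then show ?thesis
    by (simp add: sum_lessThan_eq_sum_card_vimage[of g] sum_distrib_left type2_def case_prod_unfold prod_eq_iff)
qed simp

lemma type1_eq_sum_type2:
  fixes xs :: "'x::finite list"
  shows "type1 ys y = (\<Sum>x\<in>UNIV. type2 xs ys (x, y))"
proof -
  have "real (card {i. i < length ys \<and> ys!i = y})
      = (\<Sum>x\<in>UNIV. \<Sum>i\<in>{i. i \<in> {i. i < length ys \<and> ys!i = y} \<and> xs!i = x}. 1)"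
    by (subst sum.group) auto
  also have "\<dots> = (\<Sum>x\<in>UNIV. real (card {i. i < length ys \<and> xs!i = x \<and> ys!i = y}))"
    by (simp add: conj_ac)
  finally show ?thesis
    unfolding type1_def type2_def by (simp add: sum_divide_distrib[symmetric])
qed

lemma marg_Y_eq_sum_marg_XY:
  fixes fX :: "'w::finite \<Rightarrow> 'x::finite"
  shows "marg_Y fY P y = (\<Sum>x\<in>UNIV. marg_XY fX fY P (x, y))"
proof -
  have "marg_Y fY P y = (\<Sum>x\<in>UNIV. \<Sum>w\<in>{w. w \<in> {w. fY w = y} \<and> fX w = x}. P w)"
    unfolding marg_Y_def by (rule sum.group[symmetric]) auto
  then show ?thesis
    unfolding marg_XY_def by (simp add: conj_commute)
qed

lemma marg_XY_nonneg: "(\<And>w. P w \<ge> 0) \<Longrightarrow> marg_XY fX fY P xy \<ge> 0"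
  by (simp add: marg_XY_def case_prod_unfold sum_nonneg)

lemma marg_Y_eq_type1_if_marg_XY_eq_type2:
  fixes xs :: "'x::finite list"
  assumes "marg_XY fX fY P = type2 xs ys"
  shows "marg_Y fY P = type1 ys"
  using assms by (simp add: fun_eq_iff marg_Y_eq_sum_marg_XY[where fX=fX] type1_eq_sum_type2[of ys _ xs])

lemma marg_XY_average:
  "marg_XY fX fY (\<lambda>w. (\<Sum>a\<in>A. Pf a w) / c) = (\<lambda>xy. (\<Sum>a\<in>A. marg_XY fX fY (Pf a) xy) / c)"
  unfolding marg_XY_def
  by (auto simp: fun_eq_iff sum_divide_distrib[symmetric] intro: sum.swap)

lemma marg_Y_average:
  "marg_Y fY (\<lambda>w. (\<Sum>a\<in>A. Pf a w) / c) = (\<lambda>y. (\<Sum>a\<in>A. marg_Y fY (Pf a) y) / c)"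
  unfolding marg_Y_def
  by (auto simp: fun_eq_iff sum_divide_distrib[symmetric] intro: sum.swap)

lemma convex_fun_setD:
  "convex_fun_set E \<Longrightarrow> P \<in> E \<Longrightarrow> Q \<in> E \<Longrightarrow> 0 \<le> t \<Longrightarrow> t \<le> 1
    \<Longrightarrow> (\<lambda>w. t * P w + (1 - t) * Q w) \<in> E"
  by (simp add: convex_fun_set_def)

lemma convex_fun_set_average:
  assumes "convex_fun_set E" "finite A" "A \<noteq> {}" "\<And>a. a \<in> A \<Longrightarrow> Pf a \<in> E"
  shows "(\<lambda>w. (\<Sum>a\<in>A. Pf a w) / card A) \<in> E"
  using assms(2-4)
proof (induction A rule: finite_ne_induct)
  case (singleton a)
  then show ?case by simp
next
  case (insert a A)
  define t where "t = 1 / (card A + 1)"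
  have "card A > 0"
    using insert by (simp add: card_gt_0_iff)
  moreover have "1 - t = card A * t"
    by (simp add: t_def field_simps)
  ultimately have "t * p + (1 - t) * (s / card A) = (p + s) / (card A + 1)" for p s
    by (simp add: t_def add_divide_distrib)
  then have mixture: "t * Pf a w + (1 - t) * ((\<Sum>b\<in>A. Pf b w) / card A)
      = (\<Sum>b\<in>insert a A. Pf b w) / card (insert a A)" for w
    using insert by simp
  have "(\<lambda>w. t * Pf a w + (1 - t) * ((\<Sum>b\<in>A. Pf b w) / card A)) \<in> E"
    by (rule convex_fun_setD[OF assms(1)]) (use insert in \<open>simp_all add: t_def\<close>)
  then show ?case
    unfolding mixture .
qed

lemma cond_entropy_eq:
  "cond_entropy Q = - (\<Sum>(x, y)\<in>UNIV. Q (x, y) * log 2 (Q (x, y) / (\<Sum>x'\<in>UNIV. Q (x', y))))"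
  unfolding cond_entropy_def by (intro arg_cong[where f = uminus] sum.cong) auto

lemma continuous_on_cond_entropy_marg_XY:
  fixes fX :: "'w::finite \<Rightarrow> 'x::finite" and fY :: "'w \<Rightarrow> 'y::finite"
  assumes "S \<subseteq> pmfs" "\<And>P. P \<in> S \<Longrightarrow> marg_Y fY P = q" "\<And>y. q y \<ge> 0"
  shows "continuous_on S (\<lambda>P. cond_entropy (marg_XY fX fY P))"
proof -
  have "continuous_on S (\<lambda>P. marg_XY fX fY P xy)" for xy
    unfolding marg_XY_def case_prod_unfold
    by (intro continuous_intros)
  moreover have "marg_XY fX fY P xy \<in> {0..}" if "P \<in> S" for P xy
    using that assms(1) by (auto simp: pmfs_def intro: marg_XY_nonneg)
  ultimately have cont: "continuous_on S
      (\<lambda>P. - (\<Sum>(x, y)\<in>UNIV. marg_XY fX fY P (x, y) * log 2 (marg_XY fX fY P (x, y) / q y)))"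
    unfolding case_prod_unfold
    by (intro continuous_on_minus continuous_on_sum continuous_on_compose2[OF continuous_on_mult_log_div[OF assms(3)]]) auto
  have entropy_eq: "cond_entropy (marg_XY fX fY P)
      = - (\<Sum>(x, y)\<in>UNIV. marg_XY fX fY P (x, y) * log 2 (marg_XY fX fY P (x, y) / q y))"
    if "P \<in> S" for P
    using assms(2)[OF that] by (simp add: cond_entropy_eq marg_Y_eq_sum_marg_XY[where fX = fX, symmetric])
  show ?thesis
    using cont by (rule continuous_on_eq) (simp add: entropy_eq)
qed

lemma cond_entropy_marg_XY_attains_max:
  fixes fX :: "'w::finite \<Rightarrow> 'x::finite" and fY :: "'w \<Rightarrow> 'y::finite"
  assumes "E \<subseteq> pmfs" "closed E" "\<And>y. q y \<ge> 0"
    and "{P\<in>E. marg_Y fY P = q} \<noteq> {}"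
  obtains P where "P \<in> {P\<in>E. marg_Y fY P = q}"
    and "\<And>Q. Q \<in> {P\<in>E. marg_Y fY P = q} \<Longrightarrow> cond_entropy (marg_XY fX fY Q) \<le> cond_entropy (marg_XY fX fY P)"
proof -
  have "closed {P. \<forall>y. marg_Y fY P y = q y}"
    unfolding marg_Y_def
    by (intro closed_Collect_all closed_Collect_eq continuous_intros)
  then have "closed {P\<in>E. marg_Y fY P = q}"
    using assms(2) by (simp add: Collect_conj_eq fun_eq_iff closed_Int)
  then have "compact {P\<in>E. marg_Y fY P = q}"
    using assms(1) by (intro compact_closed_subset_pmfs) auto
  moreover have "continuous_on {P\<in>E. marg_Y fY P = q} (\<lambda>P. cond_entropy (marg_XY fX fY P))"
    using assms(1,3) by (intro continuous_on_cond_entropy_marg_XY) auto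
  ultimately show ?thesis
    using continuous_attains_sup[OF _ assms(4)] that by blast
qed

lemma card_le_powr_cond_entropy_mean_type2:
  fixes T :: "'x::finite list set" and ys :: "'y::finite list"
  assumes T: "T \<subseteq> {xs. length xs = length ys}" "T \<noteq> {}"
  defines "V \<equiv> \<lambda>xy. (\<Sum>xs\<in>T. type2 xs ys xy) / card T"
  shows "card T \<le> 2 powr (length ys * cond_entropy V)"
proof -
  define N where "N = length ys"
  define W where "W = (\<lambda>(x, y). V (x, y) / (\<Sum>x'\<in>UNIV. V (x', y)))"
  \<comment> \<open>the value of \<open>L\<close> where \<open>V = 0\<close> is irrelevant: such pairs never occur in a sequence of \<open>T\<close>\<close>
  define L where "L = (\<lambda>xy. if V xy = 0 then 0 else log 2 (W xy))"
  define a where "a = (\<lambda>xs. \<Sum>i<N. L (xs!i, ys!i))"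
  have "finite T"
    using T(1) finite_lists_length_eq_UNIV finite_subset by blast
  then have card_pos: "card T > 0"
    using T(2) by (simp add: card_gt_0_iff)
  have V_nonneg: "V xy \<ge> 0" for xy
    unfolding V_def by (simp add: sum_nonneg type2_nonneg)
  have W_nonneg: "W xy \<ge> 0" for xy
    unfolding W_def by (simp add: case_prod_unfold sum_nonneg V_nonneg)
  have "(\<Sum>xs\<in>T. a xs) = N * (\<Sum>xy\<in>UNIV. (\<Sum>xs\<in>T. type2 xs ys xy) * L xy)"
    unfolding a_def N_def sum_lessThan_length_eq_type2
    by (simp add: sum_distrib_left sum_distrib_right mult.assoc sum.swap[of _ T])
  also have "\<dots> = card T * N * (\<Sum>xy\<in>UNIV. V xy * L xy)"
    using card_pos by (simp add: V_def sum_distrib_left)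
  also have "(\<Sum>xy\<in>UNIV. V xy * L xy) = - cond_entropy V"
    unfolding cond_entropy_eq L_def W_def by (auto simp: case_prod_unfold intro!: sum.cong)
  finally have mean_a: "(\<Sum>xs\<in>T. a xs) / card T = - (N * cond_entropy V)"
    using card_pos by simp
  have V_pos: "V (xs!i, ys!i) > 0" if "xs \<in> T" "i < N" for xs i
  proof -
    have "0 < type2 xs ys (xs!i, ys!i)"
      using that by (simp add: N_def type2_pos_at_index)
    also have "\<dots> \<le> (\<Sum>zs\<in>T. type2 zs ys (xs!i, ys!i))"
      using that \<open>finite T\<close> by (intro member_le_sum) (auto simp: type2_nonneg)
    finally show ?thesis
      using card_pos by (auto simp: V_def intro!: divide_pos_pos)
  qed
  have "2 powr a xs = (\<Prod>i<N. W (xs!i, ys!i))" if "xs \<in> T" for xs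
  proof -
    have "2 powr L (xs!i, ys!i) = W (xs!i, ys!i)" if "i < N" for i
    proof -
      have "V (xs!i, ys!i) \<le> (\<Sum>x\<in>UNIV. V (x, ys!i))"
        by (rule member_le_sum) (simp_all add: V_nonneg)
      with V_pos[OF \<open>xs \<in> T\<close> that] show ?thesis
        by (simp add: L_def W_def)
    qed
    then show ?thesis
      unfolding a_def by (simp add: powr_sum)
  qed
  then have "(\<Sum>xs\<in>T. 2 powr a xs) = (\<Sum>xs\<in>T. \<Prod>i<length ys. W (xs!i, ys!i))"
    by (simp add: N_def)
  also have "\<dots> \<le> 1"
  proof (rule sum_prod_lists_le_one[OF T(1) W_nonneg])
    show "(\<Sum>x\<in>UNIV. W (x, y)) \<le> 1" for y
      unfolding W_def by (simp add: sum_divide_distrib[symmetric] divide_le_eq_1)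
  qed
  finally have "(\<Sum>xs\<in>T. 2 powr a xs) \<le> 1" .
  moreover have "card T * 2 powr ((\<Sum>xs\<in>T. a xs) / card T) \<le> (\<Sum>xs\<in>T. 2 powr a xs)"
    using \<open>finite T\<close> T(2) by (rule card_mult_powr_mean_le_sum_powr) simp
  ultimately have "card T * 2 powr (- (N * cond_entropy V)) \<le> 1"
    unfolding mean_a by linarith
  then show ?thesis
    by (simp add: N_def powr_minus field_simps)
qed

lemma card_Tset_le_powr_cond_entropy:
  fixes fX :: "'w::finite \<Rightarrow> 'x::finite" and fY :: "'w \<Rightarrow> 'y::finite"
  assumes "convex_fun_set E" "Tset E fX fY ys \<noteq> {}"
  obtains P where "P \<in> E" "marg_Y fY P = type1 ys"
    and "card (Tset E fX fY ys) \<le> 2 powr (length ys * cond_entropy (marg_XY fX fY P))"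
proof -
  let ?T = "Tset E fX fY ys"
  have T_sub: "?T \<subseteq> {xs. length xs = length ys}"
    by (auto simp: Tset_def)
  then have "finite ?T"
    using finite_lists_length_eq_UNIV finite_subset by blast
  have "\<exists>Pf. \<forall>xs\<in>?T. Pf xs \<in> E \<and> marg_XY fX fY (Pf xs) = type2 xs ys"
    by (rule bchoice) (auto simp: Tset_def)
  then obtain Pf where Pf: "\<And>xs. xs \<in> ?T \<Longrightarrow> Pf xs \<in> E \<and> marg_XY fX fY (Pf xs) = type2 xs ys"
    by blast
  define Pavg where "Pavg = (\<lambda>w. (\<Sum>xs\<in>?T. Pf xs w) / card ?T)"
  have "Pavg \<in> E"
    unfolding Pavg_def using assms \<open>finite ?T\<close> Pf by (intro convex_fun_set_average) auto
  moreover have "marg_Y fY Pavg = type1 ys"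
  proof -
    have "marg_Y fY (Pf xs) = type1 ys" if "xs \<in> ?T" for xs
      using Pf[OF that] marg_Y_eq_type1_if_marg_XY_eq_type2 by blast
    then have "marg_Y fY Pavg = (\<lambda>y. (\<Sum>xs\<in>?T. type1 ys y) / card ?T)"
      by (simp add: Pavg_def marg_Y_average)
    also have "\<dots> = type1 ys"
      using assms(2) \<open>finite ?T\<close> by simp
    finally show ?thesis .
  qed
  moreover have "marg_XY fX fY Pavg = (\<lambda>xy. (\<Sum>xs\<in>?T. type2 xs ys xy) / card ?T)"
    using Pf by (simp add: Pavg_def marg_XY_average)
  ultimately show ?thesis
    using that card_le_powr_cond_entropy_mean_type2[OF T_sub assms(2)] by simp
qed

theorem lemma1:
  fixes E :: "('w::finite \<Rightarrow> real) set"
    and fX :: "'w \<Rightarrow> 'x::finite" and fY :: "'w \<Rightarrow> 'y::finite"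
    and ys :: "'y list" and N :: nat
  assumes "E \<subseteq> pmfs" and "closed E" and "convex_fun_set E"
    and "length ys = N"
  shows "(\<exists>P\<in>{P\<in>E. marg_Y fY P = type1 ys}.
            (\<forall>Q\<in>{P\<in>E. marg_Y fY P = type1 ys}.
               2 powr (real N * cond_entropy (marg_XY fX fY Q))
               \<le> 2 powr (real N * cond_entropy (marg_XY fX fY P)))
          \<and> real (card (Tset E fX fY ys)) \<le> 2 powr (real N * cond_entropy (marg_XY fX fY P)))
         \<or> ({P\<in>E. marg_Y fY P = type1 ys} = {} \<and> Tset E fX fY ys = {})"
proof (cases "{P\<in>E. marg_Y fY P = type1 ys} = {}")
  case True
  then have "Tset E fX fY ys = {}"
    using card_Tset_le_powr_cond_entropy[OF assms(3)] by blast
  with True show ?thesis by blast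
next
  case False
  let ?H = "\<lambda>P. 2 powr (real N * cond_entropy (marg_XY fX fY P))"
  obtain Pmax where Pmax: "Pmax \<in> {P\<in>E. marg_Y fY P = type1 ys}"
    and entropy_max: "\<And>Q. Q \<in> {P\<in>E. marg_Y fY P = type1 ys}
      \<Longrightarrow> cond_entropy (marg_XY fX fY Q) \<le> cond_entropy (marg_XY fX fY Pmax)"
    using cond_entropy_marg_XY_attains_max[OF assms(1,2) type1_nonneg False] by blast
  have max: "?H Q \<le> ?H Pmax" if "Q \<in> {P\<in>E. marg_Y fY P = type1 ys}" for Q
    using entropy_max[OF that] by (intro powr_mono mult_left_mono) auto
  have "card (Tset E fX fY ys) \<le> ?H Pmax"
  proof (cases "Tset E fX fY ys = {}")
    case False
    then obtain P where P: "P \<in> {P\<in>E. marg_Y fY P = type1 ys}"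
      and card_le: "card (Tset E fX fY ys) \<le> ?H P"
      using card_Tset_le_powr_cond_entropy[OF assms(3)] assms(4) by blast
    show ?thesis
      using order_trans[OF card_le max[OF P]] .
  qed simp
  with Pmax max show ?thesis by blast
qed

end
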